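(* Let $\mathfrak{A}=(V,\mu)$ be a finite-dimensional anti-commutative algebra over a field $\mathbb{K}$ of characteristic zero, and suppose $\mathfrak{B}$ is a subalgebra of $\mathfrak{A}$ such that $V$ is the (vector space) direct sum of $\mathfrak{B}$ and the center $\mathcal{Z}(\mathfrak{A})$. Let $t\in\mathbb{K}$, $t\neq 0$. Then $\mathcal{D}(t,1,0)(\mathfrak{A})$ is a vector space isomorphic to $\mathcal{D}(t,1,0)(\mathfrak{B})\times L(\mathfrak{A}/\mathfrak{A}^{(2)};\mathcal{Z}(\mathfrak{A}))$.
   Context: An anti-commutative algebra is a vector space $V$ with a bilinear map $\mu$ satisfying $\mu(X,Y)=-\mu(Y,X)$. For $\alpha,\beta,\gamma\in\mathbb{K}$, an $(\alpha,\beta,\gamma)$-derivation of $(V,\mu)$ is a linear map $D:V\to V$ with $\alpha D\mu(X,Y)=\beta\mu(DX,Y)+\gamma\mu(X,DY)$ for all $X,Y$; their space is $\mathcal{D}(\alpha,\beta,\gamma)(V,\mu)$. The center is $\mathcal{Z}(\mathfrak{A})=\{X:\mu(X,Y)=0\ \forall Y\in V\}$; the derived algebra $\mathfrak{A}^{(2)}$ is the linear span of all products $\mu(X,Y)$. $L(U;W)$ denotes the space of linear maps from $U$ to $W$. *)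

theory Defs
  imports Complex_Main
begin

definition anticomm_algebra :: "('k::field \<Rightarrow> 'v::ab_group_add \<Rightarrow> 'v) \<Rightarrow> ('v \<Rightarrow> 'v \<Rightarrow> 'v) \<Rightarrow> bool" where
  "anticomm_algebra scale mu \<longleftrightarrow> vector_space scale
     \<and> (\<forall>x. Vector_Spaces.linear scale scale (mu x))
     \<and> (\<forall>y. Vector_Spaces.linear scale scale (\<lambda>x. mu x y))
     \<and> (\<forall>x y. mu x y = - mu y x)"

definition center :: "('v::ab_group_add \<Rightarrow> 'v \<Rightarrow> 'v) \<Rightarrow> 'v set" where
  "center mu = {X. \<forall>Y. mu X Y = 0}"

definition derived_alg :: "('k::field \<Rightarrow> 'v::ab_group_add \<Rightarrow> 'v) \<Rightarrow> ('v \<Rightarrow> 'v \<Rightarrow> 'v) \<Rightarrow> 'v set" where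
  "derived_alg scale mu = module.span scale {mu X Y | X Y. True}"

definition subalgebra :: "('k::field \<Rightarrow> 'v::ab_group_add \<Rightarrow> 'v) \<Rightarrow> ('v \<Rightarrow> 'v \<Rightarrow> 'v) \<Rightarrow> 'v set \<Rightarrow> bool" where
  "subalgebra scale mu B \<longleftrightarrow> module.subspace scale B \<and> (\<forall>x\<in>B. \<forall>y\<in>B. mu x y \<in> B)"

text \<open>Linear maps U \<rightarrow> W (U, W subspaces of 'v), represented as functions on 'v
  that vanish outside U (extensional representation).\<close>
definition lin_maps :: "('k::field \<Rightarrow> 'v::ab_group_add \<Rightarrow> 'v) \<Rightarrow> 'v set \<Rightarrow> 'v set \<Rightarrow> ('v \<Rightarrow> 'v) set" where
  "lin_maps scale U W = {f. (\<forall>x\<in>U. f x \<in> W) \<and> (\<forall>x. x \<notin> U \<longrightarrow> f x = 0)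
      \<and> (\<forall>x\<in>U. \<forall>y\<in>U. f (x + y) = f x + f y)
      \<and> (\<forall>r. \<forall>x\<in>U. f (scale r x) = scale r (f x))}"

text \<open>(alpha,beta,gamma)-derivations of the subalgebra (U, mu restricted to U).
  For U = UNIV this is the space of (alpha,beta,gamma)-derivations of the whole algebra.\<close>
definition derivations :: "('k::field \<Rightarrow> 'v::ab_group_add \<Rightarrow> 'v) \<Rightarrow> ('v \<Rightarrow> 'v \<Rightarrow> 'v) \<Rightarrow> 'v set
    \<Rightarrow> 'k \<Rightarrow> 'k \<Rightarrow> 'k \<Rightarrow> ('v \<Rightarrow> 'v) set" where
  "derivations scale mu U a b c = {D \<in> lin_maps scale U U.
      \<forall>X\<in>U. \<forall>Y\<in>U. scale a (D (mu X Y)) = scale b (mu (D X) Y) + scale c (mu X (D Y))}"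

text \<open>L(A/A^(2); Z(A)), identified (canonically) with the linear maps V \<rightarrow> Z(A)
  vanishing on the derived algebra A^(2).\<close>
definition quot_maps :: "('k::field \<Rightarrow> 'v::ab_group_add \<Rightarrow> 'v) \<Rightarrow> ('v \<Rightarrow> 'v \<Rightarrow> 'v) \<Rightarrow> ('v \<Rightarrow> 'v) set" where
  "quot_maps scale mu = {f \<in> lin_maps scale UNIV (center mu). \<forall>x\<in>derived_alg scale mu. f x = 0}"

definition fadd :: "('v \<Rightarrow> 'v::ab_group_add) \<Rightarrow> ('v \<Rightarrow> 'v) \<Rightarrow> ('v \<Rightarrow> 'v)" where
  "fadd f g = (\<lambda>x. f x + g x)"

definition fscale :: "('k \<Rightarrow> 'v \<Rightarrow> 'v) \<Rightarrow> 'k \<Rightarrow> ('v \<Rightarrow> 'v) \<Rightarrow> ('v \<Rightarrow> 'v)" where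
  "fscale scale r f = (\<lambda>x. scale r (f x))"

definition iso_to_product :: "('k::field \<Rightarrow> 'v::ab_group_add \<Rightarrow> 'v) \<Rightarrow> ('v \<Rightarrow> 'v) set
    \<Rightarrow> ('v \<Rightarrow> 'v) set \<Rightarrow> ('v \<Rightarrow> 'v) set \<Rightarrow> bool" where
  "iso_to_product scale S T1 T2 \<longleftrightarrow> (\<exists>\<Phi>. bij_betw \<Phi> S (T1 \<times> T2)
      \<and> (\<forall>f\<in>S. \<forall>g\<in>S. \<Phi> (fadd f g) = (fadd (fst (\<Phi> f)) (fst (\<Phi> g)), fadd (snd (\<Phi> f)) (snd (\<Phi> g))))
      \<and> (\<forall>r. \<forall>f\<in>S. \<Phi> (fscale scale r f) = (fscale scale r (fst (\<Phi> f)), fscale scale r (snd (\<Phi> f)))))"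

end

theory Submission
  imports Defs
begin

text \<open>
  Let \<open>p\<close> be the projection onto \<open>B\<close> along the center \<open>Z\<close>. Since \<open>Z\<close> is central,
  \<open>\<mu>(X, Y) = \<mu>(p X, p Y) \<in> B\<close>; hence for \<open>t \<noteq> 0\<close> a \<open>(t,1,0)\<close>-derivation \<open>D\<close>
  satisfies \<open>D(\<mu>(X, Y)) = t\<^sup>-\<^sup>1 \<mu>(D X, Y) \<in> B\<close>, and \<open>D\<close> maps \<open>Z\<close> into \<open>Z\<close>.
  So \<open>D \<mapsto> (p \<circ> D|\<^sub>B, (1 - p) \<circ> D)\<close> sends \<open>D\<close> to a \<open>(t,1,0)\<close>-derivation of \<open>B\<close>
  and a linear map \<open>V \<rightarrow> Z\<close> vanishing on the derived algebra; this assignment is linear,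
  with inverse \<open>(D\<^sub>1, f) \<mapsto> D\<^sub>1 \<circ> p + f\<close>.
\<close>

lemma (in vector_space) lin_maps_UNIV_iff:
  "f \<in> lin_maps scale UNIV W \<longleftrightarrow> Vector_Spaces.linear scale scale f \<and> range f \<subseteq> W"
  unfolding lin_maps_def Vector_Spaces.linear_iff using vector_space_axioms by auto

lemma (in vector_space) derivations_UNIV_iff:
  "D \<in> derivations scale mu UNIV a b c \<longleftrightarrow> Vector_Spaces.linear scale scale D \<and>
     (\<forall>X Y. a *s D (mu X Y) = b *s mu (D X) Y + c *s mu X (D Y))"
  unfolding derivations_def lin_maps_UNIV_iff by auto

locale anticomm_alg =
  fixes scale :: "'k::field \<Rightarrow> 'v::ab_group_add \<Rightarrow> 'v" (infixr \<open>*s\<close> 75)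
    and mu :: "'v \<Rightarrow> 'v \<Rightarrow> 'v"
  assumes anticomm_algebra: "anticomm_algebra scale mu"
begin

sublocale vector_space scale
  using anticomm_algebra unfolding anticomm_algebra_def by blast

sublocale vector_space_pair scale scale ..

lemma linear_mu_left: "Vector_Spaces.linear scale scale (\<lambda>x. mu x y)"
  using anticomm_algebra unfolding anticomm_algebra_def by blast

lemma linear_mu_right: "Vector_Spaces.linear scale scale (mu x)"
  using anticomm_algebra unfolding anticomm_algebra_def by blast

lemma mu_antisym: "mu x y = - mu y x"
  using anticomm_algebra unfolding anticomm_algebra_def by blast

lemma mu_add_left: "mu (x + y) z = mu x z + mu y z"
  using linear_add[OF linear_mu_left] .

lemma mu_add_right: "mu z (x + y) = mu z x + mu z y"
  using linear_add[OF linear_mu_right] .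

lemma mu_scale_left: "mu (r *s x) y = r *s mu x y"
  using linear_scale[OF linear_mu_left] .

lemma mu_zero_left: "mu 0 y = 0"
  using linear_0[OF linear_mu_left] .

lemma center_mu_left: "z \<in> center mu \<Longrightarrow> mu z y = 0"
  unfolding center_def by blast

lemma center_mu_right: "z \<in> center mu \<Longrightarrow> mu y z = 0"
  using center_mu_left mu_antisym[of y z] by simp

lemma subspace_center: "subspace (center mu)"
  unfolding subspace_def center_def by (auto simp: mu_zero_left mu_add_left mu_scale_left)

lemma mu_in_derived_alg: "mu x y \<in> derived_alg scale mu"
  unfolding derived_alg_def by (rule span_base) blast

lemma linear_vanishes_on_derived_alg_iff:
  assumes lin: "Vector_Spaces.linear scale scale f"
  shows "(\<forall>x\<in>derived_alg scale mu. f x = 0) \<longleftrightarrow> (\<forall>x y. f (mu x y) = 0)"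
proof
  assume "\<forall>x\<in>derived_alg scale mu. f x = 0"
  then show "\<forall>x y. f (mu x y) = 0"
    using mu_in_derived_alg by blast
next
  assume vanish: "\<forall>x y. f (mu x y) = 0"
  show "\<forall>x\<in>derived_alg scale mu. f x = 0"
  proof
    fix x assume "x \<in> derived_alg scale mu"
    then show "f x = 0"
      unfolding derived_alg_def
      by (rule linear_eq_0_on_span[OF lin, rotated]) (use vanish in blast)
  qed
qed

lemma quot_maps_iff:
  "f \<in> quot_maps scale mu \<longleftrightarrow>
     Vector_Spaces.linear scale scale f \<and> range f \<subseteq> center mu \<and> (\<forall>x y. f (mu x y) = 0)"
  unfolding quot_maps_def lin_maps_UNIV_iff
  using linear_vanishes_on_derived_alg_iff by blast

lemma derivation_in_center:
  assumes "D \<in> derivations scale mu UNIV t 1 0" and "z \<in> center mu"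
  shows "D z \<in> center mu"
proof -
  have "mu (D z) y = t *s D (mu z y)" for y
    using assms(1) unfolding derivations_UNIV_iff by simp
  also have "t *s D (mu z y) = 0" for y
  proof -
    have "Vector_Spaces.linear scale scale D"
      using assms(1) unfolding derivations_UNIV_iff by blast
    then show ?thesis
      using linear_0 center_mu_left[OF assms(2)] by simp
  qed
  finally show ?thesis
    unfolding center_def by simp
qed

end

locale central_splitting = anticomm_alg +
  fixes B
  assumes subalgebra: "subalgebra scale mu B"
    and B_inter_center: "B \<inter> center mu = {0}"
    and B_plus_center: "\<forall>v. \<exists>b\<in>B. \<exists>z\<in>center mu. v = b + z"
begin

lemma subspace_B: "subspace B"
  using subalgebra unfolding subalgebra_def by blast

lemma mu_closed_B: "x \<in> B \<Longrightarrow> y \<in> B \<Longrightarrow> mu x y \<in> B"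
  using subalgebra unfolding subalgebra_def by blast

definition proj where
  "proj v = (SOME b. b \<in> B \<and> v - b \<in> center mu)"

lemma proj_in_B: "proj v \<in> B" and diff_proj_in_center: "v - proj v \<in> center mu"
proof -
  obtain b z where "b \<in> B" "z \<in> center mu" "v = b + z"
    using B_plus_center by blast
  then have "\<exists>b. b \<in> B \<and> v - b \<in> center mu"
    by auto
  from someI_ex[OF this] show "proj v \<in> B" "v - proj v \<in> center mu"
    unfolding proj_def by blast+
qed

lemma proj_unique:
  assumes "b \<in> B" and "v - b \<in> center mu"
  shows "proj v = b"
proof -
  have "proj v - b \<in> B"
    using subspace_diff[OF subspace_B proj_in_B assms(1)] .
  moreover have "proj v - b \<in> center mu"
    using subspace_diff[OF subspace_center assms(2) diff_proj_in_center[of v]] by simp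
  ultimately have "proj v - b \<in> B \<inter> center mu"
    by blast
  then show ?thesis
    by (simp add: B_inter_center)
qed

lemma proj_add: "proj (u + v) = proj u + proj v"
  using subspace_add[OF subspace_center diff_proj_in_center[of u] diff_proj_in_center[of v]]
  by (intro proj_unique subspace_add[OF subspace_B proj_in_B proj_in_B]) (simp add: algebra_simps)

lemma proj_scale: "proj (r *s v) = r *s proj v"
  using subspace_scale[OF subspace_center diff_proj_in_center[of v], of r]
  by (intro proj_unique subspace_scale[OF subspace_B proj_in_B]) (simp add: scale_right_diff_distrib)

lemma proj_eq_self: "b \<in> B \<Longrightarrow> proj b = b"
  using subspace_0[OF subspace_center] by (intro proj_unique) auto

lemma proj_center_eq_zero: "z \<in> center mu \<Longrightarrow> proj z = 0"
  using subspace_0[OF subspace_B] by (intro proj_unique) auto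

lemma mu_proj: "mu x y = mu (proj x) (proj y)"
proof -
  have "mu x y = mu (proj x + (x - proj x)) (proj y + (y - proj y))"
    by simp
  also have "\<dots> = mu (proj x) (proj y)"
    by (simp only: mu_add_left mu_add_right center_mu_left center_mu_right diff_proj_in_center)
      simp
  finally show ?thesis .
qed

lemma mu_in_B: "mu x y \<in> B"
  by (subst mu_proj) (intro mu_closed_B proj_in_B)

lemma proj_add_center: "b \<in> B \<Longrightarrow> z \<in> center mu \<Longrightarrow> proj (b + z) = b"
  by (intro proj_unique) auto

lemma derivation_mu_in_B:
  assumes "t \<noteq> 0" and "D \<in> derivations scale mu UNIV t 1 0"
  shows "D (mu x y) \<in> B"
proof -
  have "t *s D (mu x y) = mu (D x) y"
    using assms(2) by (simp add: derivations_UNIV_iff)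
  then have "D (mu x y) = inverse t *s mu (D x) y"
    using assms(1) by (metis scale_scale left_inverse scale_one)
  then show ?thesis
    using subspace_scale[OF subspace_B mu_in_B] by simp
qed

definition split_derivation where
  "split_derivation D = ((\<lambda>x. if x \<in> B then proj (D x) else 0), (\<lambda>x. D x - proj (D x)))"

definition glue_derivation where
  "glue_derivation D\<^sub>1 f = (\<lambda>v. D\<^sub>1 (proj v) + f v)"

lemma split_derivation_mem:
  assumes "t \<noteq> 0" and D: "D \<in> derivations scale mu UNIV t 1 0"
  shows "split_derivation D \<in> derivations scale mu B t 1 0 \<times> quot_maps scale mu"
proof -
  have lin: "Vector_Spaces.linear scale scale D"
    and der: "\<And>x y. t *s D (mu x y) = mu (D x) y"
    using D by (simp_all add: derivations_UNIV_iff)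
  have "(\<lambda>x. if x \<in> B then proj (D x) else 0) \<in> derivations scale mu B t 1 0"
    unfolding derivations_def lin_maps_def
  proof (intro CollectI conjI ballI allI impI)
    fix x y assume "x \<in> B" "y \<in> B"
    have "t *s proj (D (mu x y)) = mu (D x) y"
      using proj_eq_self[OF derivation_mu_in_B[OF assms]] der by simp
    also have "\<dots> = mu (proj (D x)) y"
      using mu_proj[of "D x" y] mu_proj[of "proj (D x)" y] proj_eq_self[OF proj_in_B] by simp
    finally show "t *s (if mu x y \<in> B then proj (D (mu x y)) else 0) =
        1 *s mu (if x \<in> B then proj (D x) else 0) y + 0 *s mu x (if y \<in> B then proj (D y) else 0)"
      using \<open>x \<in> B\<close> \<open>y \<in> B\<close> mu_closed_B by simp
  qed (auto simp: proj_in_B linear_add[OF lin] linear_scale[OF lin] proj_add proj_scale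
      subspace_add[OF subspace_B] subspace_scale[OF subspace_B])
  moreover have "(\<lambda>x. D x - proj (D x)) \<in> quot_maps scale mu"
    unfolding quot_maps_iff
  proof (intro conjI allI)
    show "Vector_Spaces.linear scale scale (\<lambda>x. D x - proj (D x))"
      using lin vector_space_axioms
      by (simp add: Vector_Spaces.linear_iff proj_add proj_scale scale_right_diff_distrib)
    show "range (\<lambda>x. D x - proj (D x)) \<subseteq> center mu"
      using diff_proj_in_center by blast
    show "D (mu x y) - proj (D (mu x y)) = 0" for x y
      using proj_eq_self[OF derivation_mu_in_B[OF assms]] by simp
  qed
  ultimately show ?thesis
    unfolding split_derivation_def by simp
qed

lemma glue_derivation_mem:
  assumes D\<^sub>1: "D\<^sub>1 \<in> derivations scale mu B t 1 0" and f: "f \<in> quot_maps scale mu"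
  shows "glue_derivation D\<^sub>1 f \<in> derivations scale mu UNIV t 1 0"
proof -
  have D\<^sub>1_mem: "\<And>x. x \<in> B \<Longrightarrow> D\<^sub>1 x \<in> B"
    and D\<^sub>1_add: "\<And>x y. x \<in> B \<Longrightarrow> y \<in> B \<Longrightarrow> D\<^sub>1 (x + y) = D\<^sub>1 x + D\<^sub>1 y"
    and D\<^sub>1_scale: "\<And>r x. x \<in> B \<Longrightarrow> D\<^sub>1 (r *s x) = r *s D\<^sub>1 x"
    and D\<^sub>1_der: "\<And>x y. x \<in> B \<Longrightarrow> y \<in> B \<Longrightarrow> t *s D\<^sub>1 (mu x y) = mu (D\<^sub>1 x) y"
    using D\<^sub>1 unfolding derivations_def lin_maps_def by auto
  have f_lin: "Vector_Spaces.linear scale scale f" and f_center: "\<And>x. f x \<in> center mu"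
    and f_mu: "\<And>x y. f (mu x y) = 0"
    using f unfolding quot_maps_iff by blast+
  have "Vector_Spaces.linear scale scale (glue_derivation D\<^sub>1 f)"
    using vector_space_axioms
    by (simp add: Vector_Spaces.linear_iff glue_derivation_def proj_add proj_scale proj_in_B
        D\<^sub>1_add D\<^sub>1_scale linear_add[OF f_lin] linear_scale[OF f_lin] scale_right_distrib)
  moreover have "t *s glue_derivation D\<^sub>1 f (mu x y) = mu (glue_derivation D\<^sub>1 f x) y" for x y
  proof -
    have "t *s glue_derivation D\<^sub>1 f (mu x y) = t *s D\<^sub>1 (mu (proj x) (proj y))"
      unfolding glue_derivation_def by (simp add: f_mu proj_eq_self mu_in_B flip: mu_proj)
    also have "\<dots> = mu (D\<^sub>1 (proj x)) (proj y)"
      by (simp add: D\<^sub>1_der proj_in_B)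
    also have "\<dots> = mu (glue_derivation D\<^sub>1 f x) y"
      unfolding glue_derivation_def
      by (subst (2) mu_proj) (simp add: proj_add_center D\<^sub>1_mem proj_in_B f_center)
    finally show ?thesis .
  qed
  ultimately show ?thesis
    by (simp add: derivations_UNIV_iff)
qed

lemma glue_split_derivation:
  assumes D: "D \<in> derivations scale mu UNIV t 1 0"
  shows "glue_derivation (fst (split_derivation D)) (snd (split_derivation D)) = D"
proof
  fix v
  have lin: "Vector_Spaces.linear scale scale D"
    using D by (simp add: derivations_UNIV_iff)
  have "proj (D v) = proj (D (proj v) + D (v - proj v))"
    using linear_add[OF lin, of "proj v" "v - proj v"] by simp
  also have "\<dots> = proj (D (proj v))"
    using derivation_in_center[OF D diff_proj_in_center]
    by (simp add: proj_add proj_center_eq_zero)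
  finally have "proj (D v) = proj (D (proj v))" .
  then show "glue_derivation (fst (split_derivation D)) (snd (split_derivation D)) v = D v"
    unfolding glue_derivation_def split_derivation_def by (simp add: proj_in_B)
qed

lemma split_glue_derivation:
  assumes D\<^sub>1: "D\<^sub>1 \<in> derivations scale mu B t 1 0" and f: "f \<in> quot_maps scale mu"
  shows "split_derivation (glue_derivation D\<^sub>1 f) = (D\<^sub>1, f)"
proof -
  have D\<^sub>1_mem: "\<And>x. x \<in> B \<Longrightarrow> D\<^sub>1 x \<in> B" and D\<^sub>1_out: "\<And>x. x \<notin> B \<Longrightarrow> D\<^sub>1 x = 0"
    using D\<^sub>1 unfolding derivations_def lin_maps_def by auto
  have f_center: "\<And>x. f x \<in> center mu"
    using f unfolding quot_maps_iff by blast
  have proj_glue: "proj (glue_derivation D\<^sub>1 f x) = D\<^sub>1 (proj x)" for x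
    unfolding glue_derivation_def by (simp add: proj_add_center D\<^sub>1_mem proj_in_B f_center)
  show ?thesis
    unfolding split_derivation_def proj_glue
    by (auto simp: fun_eq_iff proj_eq_self D\<^sub>1_out glue_derivation_def)
qed

lemma bij_betw_split_derivation:
  assumes "t \<noteq> 0"
  shows "bij_betw split_derivation (derivations scale mu UNIV t 1 0)
           (derivations scale mu B t 1 0 \<times> quot_maps scale mu)"
proof (rule bij_betw_byWitness[where f' = "case_prod glue_derivation"])
  show "\<forall>D\<in>derivations scale mu UNIV t 1 0. case_prod glue_derivation (split_derivation D) = D"
    using glue_split_derivation by (simp add: case_prod_beta)
  show "\<forall>P\<in>derivations scale mu B t 1 0 \<times> quot_maps scale mu.
      split_derivation (case_prod glue_derivation P) = P"
    using split_glue_derivation by auto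
  show "split_derivation ` derivations scale mu UNIV t 1 0
      \<subseteq> derivations scale mu B t 1 0 \<times> quot_maps scale mu"
    using split_derivation_mem[OF assms] by blast
  show "case_prod glue_derivation ` (derivations scale mu B t 1 0 \<times> quot_maps scale mu)
      \<subseteq> derivations scale mu UNIV t 1 0"
    using glue_derivation_mem by auto
qed

lemma split_derivation_fadd:
  "split_derivation (fadd D D') =
     (fadd (fst (split_derivation D)) (fst (split_derivation D')),
      fadd (snd (split_derivation D)) (snd (split_derivation D')))"
  unfolding split_derivation_def fadd_def by (auto simp: proj_add fun_eq_iff)

lemma split_derivation_fscale:
  "split_derivation (fscale scale r D) =
     (fscale scale r (fst (split_derivation D)), fscale scale r (snd (split_derivation D)))"
  unfolding split_derivation_def fscale_def
  by (auto simp: proj_scale scale_right_diff_distrib fun_eq_iff)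

theorem iso_to_product_derivations:
  assumes "t \<noteq> 0"
  shows "iso_to_product scale (derivations scale mu UNIV t 1 0)
           (derivations scale mu B t 1 0) (quot_maps scale mu)"
  unfolding iso_to_product_def
proof (intro exI conjI)
  show "bij_betw split_derivation (derivations scale mu UNIV t 1 0)
      (derivations scale mu B t 1 0 \<times> quot_maps scale mu)"
    using bij_betw_split_derivation[OF assms] .
qed (simp_all add: split_derivation_fadd split_derivation_fscale)

end

theorem lemma2p6:
  fixes scale :: "'k::field_char_0 \<Rightarrow> 'v::ab_group_add \<Rightarrow> 'v"
    and mu :: "'v \<Rightarrow> 'v \<Rightarrow> 'v"
    and B :: "'v set"
    and t :: 'k
  assumes "anticomm_algebra scale mu"
    and "\<exists>Basis. finite_dimensional_vector_space scale Basis"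
    and "subalgebra scale mu B"
    and "B \<inter> center mu = {0}"
    and "\<forall>v. \<exists>b\<in>B. \<exists>z\<in>center mu. v = b + z"
    and "t \<noteq> 0"
  shows "iso_to_product scale (derivations scale mu UNIV t 1 0)
           (derivations scale mu B t 1 0) (quot_maps scale mu)"
proof -
  interpret central_splitting scale mu B
    using assms(1,3-5) by unfold_locales
  show ?thesis
    using iso_to_product_derivations[OF assms(6)] .
qed

end
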